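(* (1) The mapping $F\colon(\mathcal{H}\times\mathcal{H})\setminus\Delta\to T^*\mathcal{H}$ defined by \begin{equation} F(p,q)=(q,\alpha_{(p,q)}) \end{equation} provides a diffeomorphism between $(\mathcal{H}\times\mathcal{H})\setminus\Delta$ and $T^*\mathcal{H}\setminus 0_\mathcal{H}$, where $0_\mathcal{H}$ denotes the zero section. (2) The real part of $\Omega_{\mathcal{H}}$ is equal to the pullback of the canonical symplectic form on $T^*\mathcal{H}$ by $F$.
   Context: $\mathcal{H}=\mathbb{C}\times\mathbb{R}$ is the 3-dimensional Heisenberg group with coordinates $(z,u)=(x,y,u)$ and group law $(z,u)\cdot(z',u')=(z+z',u+u'-\tfrac{1}{2}\Im(z\overline{z'}))$; $\Delta$ is the diagonal of $\mathcal{H}\times\mathcal{H}$. For $p=(z,u)$ let $A(p)=|z|^2-4iu$, and $\rho(p,q)=A(p^{-1}q)$. Define the complex 2-form $\Omega_{\mathcal{H}}=d_pd_q\log\rho$ and the real 1-form $\alpha=\Re d_q\log\rho$ on $(\mathcal{H}\times\mathcal{H})\setminus\Delta$ (here $d_p,d_q$ are exterior derivatives in the first and second factors); for fixed $p$, $\alpha_{(p,\cdot)}$ is a 1-form on $\mathcal{H}\setminus\{p\}$, so $\alpha_{(p,q)}\in T^*_q\mathcal{H}$. *)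

theory Defs
  imports "HOL-Analysis.Analysis"
begin

type_synonym heis = "complex \<times> real"

definition heis_mult :: "heis \<Rightarrow> heis \<Rightarrow> heis" where
  "heis_mult = (\<lambda>(z,u) (z',u'). (z + z', u + u' - Im (z * cnj z') / 2))"

definition heis_inv :: "heis \<Rightarrow> heis" where
  "heis_inv = (\<lambda>(z,u). (-z, -u))"

definition heis_A :: "heis \<Rightarrow> complex" where
  "heis_A = (\<lambda>(z,u). complex_of_real ((cmod z)^2) - 4 * \<i> * complex_of_real u)"

definition heis_rho :: "heis \<Rightarrow> heis \<Rightarrow> complex" where
  "heis_rho p q = heis_A (heis_mult (heis_inv p) q)"

text \<open>log rho on (H x H) minus diagonal; rho has nonnegative real part and is nonzero
  there, so the principal logarithm is smooth; only derivatives of it are used.\<close>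
definition logrho :: "heis \<times> heis \<Rightarrow> complex" where
  "logrho = (\<lambda>(p,q). Ln (heis_rho p q))"

definition d_p :: "(heis \<times> heis \<Rightarrow> 'b::real_normed_vector) \<Rightarrow> heis \<times> heis \<Rightarrow> heis \<Rightarrow> 'b" where
  "d_p f = (\<lambda>(p,q) a. frechet_derivative (\<lambda>p'. f (p', q)) (at p) a)"

definition d_q :: "(heis \<times> heis \<Rightarrow> 'b::real_normed_vector) \<Rightarrow> heis \<times> heis \<Rightarrow> heis \<Rightarrow> 'b" where
  "d_q f = (\<lambda>(p,q) b. frechet_derivative (\<lambda>q'. f (p, q')) (at q) b)"

text \<open>Omega_H = d_p d_q log rho, as an alternating bilinear form on tangent vectors
  (a,b), (a',b') of H x H: sum of d^2 f/dp_i dq_j (dp_i wedge dq_j).\<close>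
definition Omega_H :: "heis \<times> heis \<Rightarrow> heis \<times> heis \<Rightarrow> heis \<times> heis \<Rightarrow> complex" where
  "Omega_H = (\<lambda>pq (a,b) (a',b').
      d_p (\<lambda>x. d_q logrho x b') pq a - d_p (\<lambda>x. d_q logrho x b) pq a')"

definition alpha_H :: "heis \<times> heis \<Rightarrow> heis \<Rightarrow> real" where
  "alpha_H pq w = Re (d_q logrho pq w)"

text \<open>Cotangent vectors at a point of H are identified with their component vectors
  (w.r.t. the coordinate basis dx, dy, du), i.e. T^*H = H x R^3.\<close>
definition covec :: "(heis \<Rightarrow> real) \<Rightarrow> heis" where
  "covec l = (\<Sum>b\<in>Basis. l b *\<^sub>R b)"

definition F_H :: "heis \<times> heis \<Rightarrow> heis \<times> heis" where
  "F_H = (\<lambda>(p,q). (q, covec (alpha_H (p,q))))"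

text \<open>Canonical symplectic form omega = d theta = sum d xi_i wedge d x_i on T^*H.\<close>
definition canonical_symplectic :: "heis \<times> heis \<Rightarrow> heis \<times> heis \<Rightarrow> heis \<times> heis \<Rightarrow> real" where
  "canonical_symplectic = (\<lambda>_ (X1,\<Xi>1) (X2,\<Xi>2). \<Xi>1 \<bullet> X2 - \<Xi>2 \<bullet> X1)"

definition pullback2 ::
  "('a::real_normed_vector \<Rightarrow> 'b::real_normed_vector) \<Rightarrow> ('b \<Rightarrow> 'b \<Rightarrow> 'b \<Rightarrow> real) \<Rightarrow> 'a \<Rightarrow> 'a \<Rightarrow> 'a \<Rightarrow> real" where
  "pullback2 F \<omega> x v w = \<omega> (F x) (frechet_derivative F (at x) v) (frechet_derivative F (at x) w)"

fun higher_differentiable_on ::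
  "'a::real_normed_vector set \<Rightarrow> ('a \<Rightarrow> 'b::real_normed_vector) \<Rightarrow> nat \<Rightarrow> bool" where
  "higher_differentiable_on S f 0 = continuous_on S f"
| "higher_differentiable_on S f (Suc n) =
     (f differentiable_on S \<and>
      (\<forall>v. higher_differentiable_on S (\<lambda>x. frechet_derivative f (at x) v) n))"

definition smooth_on :: "'a::real_normed_vector set \<Rightarrow> ('a \<Rightarrow> 'b::real_normed_vector) \<Rightarrow> bool" where
  "smooth_on S f \<longleftrightarrow> (\<forall>n. higher_differentiable_on S f n)"

definition diffeomorphism_betw ::
  "'a::real_normed_vector set \<Rightarrow> 'b::real_normed_vector set \<Rightarrow> ('a \<Rightarrow> 'b) \<Rightarrow> bool" where
  "diffeomorphism_betw S T f \<longleftrightarrow>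
     smooth_on S f \<and> f ` S = T \<and>
     (\<exists>g. smooth_on T g \<and> g ` T = S \<and> (\<forall>x\<in>S. g (f x) = x) \<and> (\<forall>y\<in>T. f (g y) = y))"

end

theory Submission
  imports Defs
begin

text \<open>
  Write p = (z, u), q = (w, v) and B = 1 / \<rho>(p, q). Since d_q log \<rho> = B d_q \<rho>, the
  covector \<alpha>(p, q) has coordinates \<xi> = (2B (w - z) - 2i (Im B) w, 4 Im B). This is
  inverted explicitly: \<eta> = \<xi>_z + i \<xi>_u w / 2 equals 2B (w - z), and Re \<rho> = |w - z|^2
  gives Re B = |w - z|^2 |B|^2 = |\<eta>|^2 / 4, so B = |\<eta>|^2 / 4 + i \<xi>_u / 4; then
  z = w - \<eta> / 2B, and u is read off from Im \<rho>. F and its inverse are rational in the real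
  coordinates with non-vanishing denominators, hence smooth.

  For the symplectic part let D_c(a, b) be the derivative of d_q log \<rho> (\<cdot>) c in the
  direction (a, b). Then \<Omega>((a, b), (a', b')) = D_b'(a, 0) - D_b(a', 0), whereas the pullback
  of \<Sigma> d\<xi>_i \<and> dx_i is Re (D_b'(a, b) - D_b(a', b')). The two differ by
  Re (D_b'(0, b) - D_b(0, b')), which vanishes because the second q-derivative of log \<rho>
  is symmetric.
\<close>

section \<open>Closure properties of higher differentiability\<close>

lemma higher_differentiable_on_Suc_imp:
  "higher_differentiable_on S f (Suc n) \<Longrightarrow> higher_differentiable_on S f n"
  by (induction n arbitrary: f) (auto simp: differentiable_imp_continuous_on)

lemma higher_differentiable_on_cong:
  assumes "open S" "\<And>x. x \<in> S \<Longrightarrow> f x = g x" "higher_differentiable_on S f n"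
  shows "higher_differentiable_on S g n"
  using assms(2,3)
proof (induction n arbitrary: f g)
  case 0
  then show ?case using continuous_on_cong by fastforce
next
  case (Suc n)
  have g': "(g has_derivative frechet_derivative f (at x)) (at x)" if "x \<in> S" for x
  proof (rule has_derivative_transform_within_open[OF _ assms(1) that Suc.prems(1)])
    show "(f has_derivative frechet_derivative f (at x)) (at x)"
      using Suc.prems(2) that assms(1)
      by (simp add: differentiable_on_eq_differentiable_at frechet_derivative_works[symmetric])
  qed
  then have "g differentiable_on S"
    using assms(1) differentiable_on_eq_differentiable_at differentiableI by blast
  moreover have "higher_differentiable_on S (\<lambda>x. frechet_derivative g (at x) v) n" for v
    by (rule Suc.IH[of "\<lambda>x. frechet_derivative f (at x) v"])
      (use Suc.prems frechet_derivative_at[OF g'] in auto)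
  ultimately show ?case by simp
qed

lemma higher_differentiable_on_SucI:
  assumes "open S"
    and "\<And>x. x \<in> S \<Longrightarrow> (f has_derivative f' x) (at x)"
    and "\<And>v. higher_differentiable_on S (\<lambda>x. f' x v) n"
  shows "higher_differentiable_on S f (Suc n)"
proof -
  have "f differentiable_on S"
    using assms(1,2) differentiable_on_eq_differentiable_at differentiableI by blast
  moreover have "higher_differentiable_on S (\<lambda>x. frechet_derivative f (at x) v) n" for v
    by (rule higher_differentiable_on_cong[OF assms(1) _ assms(3)[of v]])
      (metis assms(2) frechet_derivative_at)
  ultimately show ?thesis by simp
qed

lemma higher_differentiable_on_Suc_has_derivative:
  assumes "open S" "higher_differentiable_on S f (Suc n)" "x \<in> S"
  shows "(f has_derivative frechet_derivative f (at x)) (at x)"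
  using assms by (simp add: differentiable_on_eq_differentiable_at frechet_derivative_works[symmetric])

named_theorems higher_differentiable_intros

lemma higher_differentiable_on_const [higher_differentiable_intros]:
  "open S \<Longrightarrow> higher_differentiable_on S (\<lambda>x. c) n"
proof (induction n arbitrary: c)
  case (Suc n)
  then show ?case by (intro higher_differentiable_on_SucI[where f' = "\<lambda>_ _. 0"]) auto
qed simp

lemma higher_differentiable_on_id [higher_differentiable_intros]:
  "open S \<Longrightarrow> higher_differentiable_on S (\<lambda>x. x) n"
proof (cases n)
  case (Suc m)
  assume "open S"
  then show ?thesis unfolding Suc
    by (intro higher_differentiable_on_SucI[where f' = "\<lambda>_ v. v"] higher_differentiable_on_const) auto
qed simp

lemma higher_differentiable_on_compose_linear:
  assumes "bounded_linear L" "open S" "higher_differentiable_on S f n"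
  shows "higher_differentiable_on S (\<lambda>x. L (f x)) n"
  using assms(3)
proof (induction n arbitrary: f)
  case 0
  then show ?case
    using assms(1) linear_continuous_on continuous_on_compose2[of UNIV L S f] by auto
next
  case (Suc n)
  show ?case
  proof (rule higher_differentiable_on_SucI[OF assms(2)])
    fix x assume "x \<in> S"
    then show "((\<lambda>x. L (f x)) has_derivative (\<lambda>v. L (frechet_derivative f (at x) v))) (at x)"
      using bounded_linear.has_derivative[OF assms(1)]
        higher_differentiable_on_Suc_has_derivative[OF assms(2) Suc.prems] by blast
  next
    show "higher_differentiable_on S (\<lambda>x. L (frechet_derivative f (at x) v)) n" for v
      using Suc by simp
  qed
qed

lemma higher_differentiable_on_add [higher_differentiable_intros]:
  assumes "open S"
  shows "higher_differentiable_on S f n \<Longrightarrow> higher_differentiable_on S g n \<Longrightarrow>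
    higher_differentiable_on S (\<lambda>x. f x + g x) n"
proof (induction n arbitrary: f g)
  case 0
  then show ?case by (simp add: continuous_on_add)
next
  case (Suc n)
  show ?case
  proof (rule higher_differentiable_on_SucI[OF assms])
    fix x assume "x \<in> S"
    then show "((\<lambda>x. f x + g x) has_derivative
        (\<lambda>v. frechet_derivative f (at x) v + frechet_derivative g (at x) v)) (at x)"
      using has_derivative_add higher_differentiable_on_Suc_has_derivative[OF assms] Suc.prems
      by blast
  next
    show "higher_differentiable_on S
        (\<lambda>x. frechet_derivative f (at x) v + frechet_derivative g (at x) v) n" for v
      using Suc by simp
  qed
qed

lemma higher_differentiable_on_bilinear:
  assumes "bounded_bilinear B" "open S"
  shows "higher_differentiable_on S f n \<Longrightarrow> higher_differentiable_on S g n \<Longrightarrow>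
    higher_differentiable_on S (\<lambda>x. B (f x) (g x)) n"
proof (induction n arbitrary: f g)
  case 0
  then show ?case by (simp add: bounded_bilinear.continuous_on[OF assms(1)])
next
  case (Suc n)
  note f = higher_differentiable_on_Suc_has_derivative[OF assms(2) Suc.prems(1)]
  note g = higher_differentiable_on_Suc_has_derivative[OF assms(2) Suc.prems(2)]
  show ?case
  proof (rule higher_differentiable_on_SucI[OF assms(2)])
    fix x assume x: "x \<in> S"
    show "((\<lambda>x. B (f x) (g x)) has_derivative (\<lambda>v. B (f x) (frechet_derivative g (at x) v)
        + B (frechet_derivative f (at x) v) (g x))) (at x)"
      by (rule bounded_bilinear.FDERIV[OF assms(1) f[OF x] g[OF x]])
  next
    show "higher_differentiable_on S (\<lambda>x. B (f x) (frechet_derivative g (at x) v)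
        + B (frechet_derivative f (at x) v) (g x)) n" for v
      using Suc.prems higher_differentiable_on_Suc_imp[OF Suc.prems(1)]
        higher_differentiable_on_Suc_imp[OF Suc.prems(2)]
      by (intro higher_differentiable_on_add[OF assms(2)] Suc.IH) simp_all
  qed
qed

lemma higher_differentiable_on_inverse [higher_differentiable_intros]:
  fixes f :: "'a::real_normed_vector \<Rightarrow> 'b::real_normed_div_algebra"
  assumes "open S" "\<And>x. x \<in> S \<Longrightarrow> f x \<noteq> 0"
  shows "higher_differentiable_on S f n \<Longrightarrow> higher_differentiable_on S (\<lambda>x. inverse (f x)) n"
proof (induction n)
  case 0
  then show ?case using assms(2) by (auto intro!: continuous_on_inverse)
next
  case (Suc n)
  show ?case
  proof (rule higher_differentiable_on_SucI[OF assms(1)])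
    fix x assume x: "x \<in> S"
    show "((\<lambda>x. inverse (f x)) has_derivative
        (\<lambda>v. - (inverse (f x) * frechet_derivative f (at x) v * inverse (f x)))) (at x)"
      by (rule Deriv.has_derivative_inverse[OF assms(2)[OF x]
            higher_differentiable_on_Suc_has_derivative[OF assms(1) Suc.prems x]])
  next
    show "higher_differentiable_on S
        (\<lambda>x. - (inverse (f x) * frechet_derivative f (at x) v * inverse (f x))) n" for v
      using Suc.prems Suc.IH[OF higher_differentiable_on_Suc_imp[OF Suc.prems]]
      by (intro higher_differentiable_on_compose_linear[OF bounded_linear_minus[OF bounded_linear_ident]]
          higher_differentiable_on_bilinear[OF bounded_bilinear_mult] assms(1)) simp_all
  qed
qed

lemma higher_differentiable_on_Pair [higher_differentiable_intros]:
  assumes "open S" "higher_differentiable_on S f n" "higher_differentiable_on S g n"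
  shows "higher_differentiable_on S (\<lambda>x. (f x, g x)) n"
proof -
  have "higher_differentiable_on S (\<lambda>x. (f x, 0) + (0, g x)) n"
    using assms higher_differentiable_on_compose_linear[of "\<lambda>y. (y, 0)"]
      higher_differentiable_on_compose_linear[of "\<lambda>y. (0, y)"]
    by (intro higher_differentiable_on_add) (simp_all add: bounded_linear_Pair)
  then show ?thesis by simp
qed

(* Only instances are declared: the generic composition rule unifies with every goal
   and would make intro loop. *)
lemmas [higher_differentiable_intros] =
  higher_differentiable_on_bilinear[OF bounded_bilinear_mult]
  higher_differentiable_on_compose_linear[OF bounded_linear_fst]
  higher_differentiable_on_compose_linear[OF bounded_linear_snd]
  higher_differentiable_on_compose_linear[OF bounded_linear_cnj]
  higher_differentiable_on_compose_linear[OF bounded_linear_Im]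
  higher_differentiable_on_compose_linear[OF bounded_linear_of_real]
  higher_differentiable_on_compose_linear[OF bounded_linear_divide]

lemma higher_differentiable_on_diff [higher_differentiable_intros]:
  "open S \<Longrightarrow> higher_differentiable_on S f n \<Longrightarrow> higher_differentiable_on S g n \<Longrightarrow>
    higher_differentiable_on S (\<lambda>x. f x - g x) n"
  using higher_differentiable_on_add[of S f n "\<lambda>x. - g x"]
    higher_differentiable_on_compose_linear[OF bounded_linear_minus[OF bounded_linear_ident],
      of S g n]
  by simp

lemma open_off_diagonal: "open {(p, q). p \<noteq> (q::'a::t2_space)}"
  unfolding split_def by (intro open_Collect_neq continuous_intros)

lemma open_nonzero_fibres: "open {(q, \<xi>). \<xi> \<noteq> (0::'b::{t2_space, zero})}"
  unfolding split_def by (intro open_Collect_neq continuous_intros)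

lemma diffeomorphism_betwI:
  assumes "smooth_on S f" "smooth_on T g" "f ` S \<subseteq> T" "g ` T \<subseteq> S"
    and "\<And>x. x \<in> S \<Longrightarrow> g (f x) = x" "\<And>y. y \<in> T \<Longrightarrow> f (g y) = y"
  shows "diffeomorphism_betw S T f"
proof -
  have "f ` S = T" "g ` T = S"
    using assms(3-6) by force+
  then show ?thesis
    using assms unfolding diffeomorphism_betw_def by blast
qed

section \<open>The Heisenberg gauge and its derivatives\<close>

lemma heis_rho_eq:
  "heis_rho p q = (fst q - fst p) * cnj (fst q - fst p)
     - 4 * \<i> * complex_of_real (snd q - snd p + Im (fst p * cnj (fst q)) / 2)"
proof -
  obtain z u w v where "p = (z, u)" "q = (w, v)" by fastforce
  then show ?thesis
    unfolding heis_rho_def heis_A_def heis_mult_def heis_inv_def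
    by (simp add: complex_eq_iff cmod_power2) (simp add: power2_eq_square field_simps)
qed

lemma Re_heis_rho: "Re (heis_rho p q) = (cmod (fst q - fst p))\<^sup>2"
  unfolding heis_rho_eq complex_norm_square[symmetric] by simp

lemma Im_heis_rho: "Im (heis_rho p q) = - 4 * (snd q - snd p + Im (fst p * cnj (fst q)) / 2)"
  unfolding heis_rho_eq complex_norm_square[symmetric] by simp

lemma heis_rho_eq_0_iff: "heis_rho p q = 0 \<longleftrightarrow> p = q"
proof
  assume "heis_rho p q = 0"
  then have "Re (heis_rho p q) = 0" "Im (heis_rho p q) = 0" by simp_all
  then have "fst q = fst p" "snd q - snd p + Im (fst p * cnj (fst q)) / 2 = 0"
    unfolding Re_heis_rho Im_heis_rho by simp_all
  then show "p = q" by (simp add: prod_eq_iff complex_mult_cnj)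
qed (simp add: heis_rho_eq complex_mult_cnj)

lemma heis_rho_nonpos_Reals: "p \<noteq> q \<Longrightarrow> heis_rho p q \<notin> \<real>\<^sub>\<le>\<^sub>0"
  using heis_rho_eq_0_iff[of p q] Re_heis_rho[of p q]
  by (auto simp: complex_nonpos_Reals_iff complex_eq_iff)

definition rho_dp :: "heis \<Rightarrow> heis \<Rightarrow> heis \<Rightarrow> complex" where
  "rho_dp p q a = - (fst a * cnj (fst q - fst p)) - (fst q - fst p) * cnj (fst a)
     - 4 * \<i> * complex_of_real (- snd a + Im (fst a * cnj (fst q)) / 2)"

definition rho_dq :: "heis \<Rightarrow> heis \<Rightarrow> heis \<Rightarrow> complex" where
  "rho_dq p q b = fst b * cnj (fst q - fst p) + (fst q - fst p) * cnj (fst b)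
     - 4 * \<i> * complex_of_real (snd b + Im (fst p * cnj (fst b)) / 2)"

definition rho_dpdq :: "heis \<Rightarrow> heis \<Rightarrow> complex" where
  "rho_dpdq a c = - (fst c * cnj (fst a)) - fst a * cnj (fst c)
     - 4 * \<i> * complex_of_real (Im (fst a * cnj (fst c)) / 2)"

definition rho_dqdq :: "heis \<Rightarrow> heis \<Rightarrow> complex" where
  "rho_dqdq b c = fst c * cnj (fst b) + fst b * cnj (fst c)"

lemma rho_derivatives_zero [simp]:
  "rho_dp p q 0 = 0" "rho_dq p q 0 = 0" "rho_dpdq 0 c = 0" "rho_dqdq 0 c = 0"
  by (simp_all add: rho_dp_def rho_dq_def rho_dpdq_def rho_dqdq_def)

lemma rho_dqdq_commute: "rho_dqdq b c = rho_dqdq c b"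
  by (simp add: rho_dqdq_def)

lemma has_derivative_heis_rho:
  "((\<lambda>x. heis_rho (fst x) (snd x)) has_derivative
     (\<lambda>h. rho_dp (fst x) (snd x) (fst h) + rho_dq (fst x) (snd x) (snd h))) (at x within X)"
  unfolding heis_rho_eq rho_dp_def rho_dq_def
  by (rule derivative_eq_intros refl | simp)+ (auto simp: fun_eq_iff complex_eq_iff field_simps)

lemma has_derivative_heis_rho_right:
  "(heis_rho p has_derivative rho_dq p q) (at q within X)"
  unfolding heis_rho_eq[abs_def] rho_dq_def[abs_def]
  by (rule derivative_eq_intros refl | simp)+ (auto simp: fun_eq_iff algebra_simps)

lemma has_derivative_rho_dq:
  "((\<lambda>x. rho_dq (fst x) (snd x) c) has_derivative
     (\<lambda>h. rho_dpdq (fst h) c + rho_dqdq (snd h) c)) (at x within X)"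
  unfolding rho_dq_def rho_dpdq_def rho_dqdq_def
  by (rule derivative_eq_intros refl | simp)+ (auto simp: fun_eq_iff complex_eq_iff field_simps)

definition rho_inv :: "heis \<times> heis \<Rightarrow> complex" where
  "rho_inv x = inverse (heis_rho (fst x) (snd x))"

lemma has_derivative_logrho_right:
  assumes "p \<noteq> q"
  shows "((\<lambda>q'. logrho (p, q')) has_derivative (\<lambda>c. rho_inv (p, q) * rho_dq p q c)) (at q)"
proof -
  have "(Ln has_derivative (*) (rho_inv (p, q))) (at (heis_rho p q))"
    using has_field_derivative_Ln[OF heis_rho_nonpos_Reals[OF assms]]
    by (simp add: has_field_derivative_def rho_inv_def)
  from has_derivative_compose[OF has_derivative_heis_rho_right this] show ?thesis
    by (simp add: logrho_def)
qed

lemma d_q_logrho: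
  "p \<noteq> q \<Longrightarrow> d_q logrho (p, q) = (\<lambda>c. rho_inv (p, q) * rho_dq p q c)"
  unfolding d_q_def using frechet_derivative_at[OF has_derivative_logrho_right] by simp

lemma higher_differentiable_on_heis_rho [higher_differentiable_intros]:
  "open S \<Longrightarrow> higher_differentiable_on S (\<lambda>x. heis_rho (fst x) (snd x)) n"
  unfolding heis_rho_eq by (intro higher_differentiable_intros)

section \<open>The map F and its inverse\<close>

lemma covec_eq: "covec l = (complex_of_real (l (1, 0)) + \<i> * complex_of_real (l (\<i>, 0)), l (0, 1))"
  unfolding covec_def Basis_prod_def Basis_complex_def
  by (simp add: sum.union_disjoint sum.reindex inj_on_def complex_eq_iff)

definition F_coord :: "heis \<times> heis \<Rightarrow> heis \<times> heis" where
  "F_coord x = (snd x,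
     (2 * rho_inv x * (fst (snd x) - fst (fst x))
        - 2 * \<i> * complex_of_real (Im (rho_inv x)) * fst (snd x),
      4 * Im (rho_inv x)))"

lemma F_H_eq_F_coord:
  assumes "fst x \<noteq> snd x"
  shows "F_H x = F_coord x"
proof -
  obtain p q where x: "x = (p, q)" by (cases x)
  with assms show ?thesis
    by (simp add: F_H_def F_coord_def alpha_H_def covec_eq d_q_logrho rho_dq_def
        complex_eq_iff algebra_simps)
qed

lemma higher_differentiable_on_F_coord:
  "higher_differentiable_on {(p, q). p \<noteq> q} F_coord n"
  unfolding F_coord_def[abs_def] rho_inv_def
  by (intro higher_differentiable_intros open_off_diagonal) (auto simp: heis_rho_eq_0_iff)

lemma higher_differentiable_on_F_H:
  "higher_differentiable_on {(p, q). p \<noteq> q} F_H n"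
  by (rule higher_differentiable_on_cong[OF open_off_diagonal _ higher_differentiable_on_F_coord])
    (use F_H_eq_F_coord in \<open>auto simp: split_beta\<close>)

lemma Re_inverse_complex: "Re (inverse c) = Re c * (cmod (inverse c))\<^sup>2"
  by (simp add: norm_inverse cmod_power2 power_inverse divide_inverse)

lemma Re_rho_inv: "Re (rho_inv x) = (cmod (fst (snd x) - fst (fst x)))\<^sup>2 * (cmod (rho_inv x))\<^sup>2"
  unfolding rho_inv_def Re_inverse_complex Re_heis_rho ..

definition F_inv_eta :: "heis \<times> heis \<Rightarrow> complex" where
  "F_inv_eta y = fst (snd y) + \<i> * complex_of_real (snd (snd y)) * fst (fst y) / 2"

definition F_inv_B :: "heis \<times> heis \<Rightarrow> complex" where
  "F_inv_B y = F_inv_eta y * cnj (F_inv_eta y) / 4 + \<i> * complex_of_real (snd (snd y) / 4)"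

definition F_inv_z :: "heis \<times> heis \<Rightarrow> complex" where
  "F_inv_z y = fst (fst y) - F_inv_eta y * inverse (F_inv_B y) / 2"

definition F_inv :: "heis \<times> heis \<Rightarrow> heis \<times> heis" where
  "F_inv y = ((F_inv_z y,
      snd (fst y) + Im (F_inv_z y * cnj (fst (fst y))) / 2 + Im (inverse (F_inv_B y)) / 4), fst y)"

lemma Re_F_inv_B: "Re (F_inv_B y) = (cmod (F_inv_eta y))\<^sup>2 / 4"
  unfolding F_inv_B_def complex_norm_square[symmetric] by simp

lemma Im_F_inv_B: "Im (F_inv_B y) = snd (snd y) / 4"
  unfolding F_inv_B_def complex_norm_square[symmetric] by simp

lemma F_inv_B_eq_0_iff: "F_inv_B y = 0 \<longleftrightarrow> snd y = 0"
proof
  assume "F_inv_B y = 0"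
  then have "F_inv_eta y = 0" "snd (snd y) = 0"
    using Re_F_inv_B[of y] Im_F_inv_B[of y] by simp_all
  then show "snd y = 0"
    by (simp add: F_inv_eta_def prod_eq_iff)
qed (simp add: F_inv_B_def F_inv_eta_def)

lemma F_inv_F_coord:
  assumes "fst x \<noteq> snd x"
  shows "F_inv_B (F_coord x) = rho_inv x" and "F_inv (F_coord x) = x"
proof -
  obtain z u w v where x: "x = ((z, u), (w, v))" by (cases x) auto
  define B where "B = rho_inv x"
  have "heis_rho (z, u) (w, v) \<noteq> 0"
    using assms by (simp add: x heis_rho_eq_0_iff)
  then have B_nz: "B \<noteq> 0" and inverse_B: "inverse B = heis_rho (z, u) (w, v)"
    by (simp_all add: B_def rho_inv_def x)
  have eta: "F_inv_eta (F_coord x) = 2 * B * (w - z)"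
    by (simp add: F_inv_eta_def F_coord_def x B_def algebra_simps)
  have "Re (F_inv_B (F_coord x)) = Re B"
    unfolding Re_F_inv_B eta B_def Re_rho_inv
    by (simp add: x norm_mult power_mult_distrib)
  moreover have "Im (F_inv_B (F_coord x)) = Im B"
    by (simp add: Im_F_inv_B F_coord_def B_def)
  ultimately show B: "F_inv_B (F_coord x) = rho_inv x"
    by (simp add: complex_eq_iff B_def)
  have z: "F_inv_z (F_coord x) = z"
    unfolding F_inv_z_def B eta B_def[symmetric]
    using B_nz by (simp add: F_coord_def x field_simps)
  show "F_inv (F_coord x) = x"
    unfolding F_inv_def z B B_def[symmetric] inverse_B
    by (simp add: F_coord_def x Im_heis_rho field_simps)
qed

lemma F_coord_F_inv:
  assumes "snd y \<noteq> 0"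
  shows "rho_inv (F_inv y) = F_inv_B y" and "F_coord (F_inv y) = y"
proof -
  obtain w v a c where y: "y = ((w, v), (a, c))" by (cases y) auto
  define B where "B = F_inv_B y"
  define z where "z = F_inv_z y"
  have B_nz: "B \<noteq> 0"
    using assms by (simp add: B_def F_inv_B_eq_0_iff)
  have wz: "w - z = F_inv_eta y * inverse B / 2"
    by (simp add: z_def F_inv_z_def B_def y)
  have "Re (heis_rho (fst (F_inv y)) (snd (F_inv y))) = Re (inverse B)"
    unfolding Re_heis_rho Re_inverse_complex B_def Re_F_inv_B
    by (simp add: F_inv_def y wz[unfolded z_def B_def y] norm_mult norm_divide power_mult_distrib
        power_divide)
  moreover have "Im (heis_rho (fst (F_inv y)) (snd (F_inv y))) = Im (inverse B)"
    by (simp add: Im_heis_rho F_inv_def y B_def del: inverse_complex.sel)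
  ultimately have "heis_rho (fst (F_inv y)) (snd (F_inv y)) = inverse B"
    by (simp add: complex_eq_iff)
  then show B: "rho_inv (F_inv y) = F_inv_B y"
    by (simp add: rho_inv_def B_def)
  have "F_coord (F_inv y) = ((w, v), 2 * B * (w - z) - 2 * \<i> * complex_of_real (Im B) * w, 4 * Im B)"
    unfolding F_coord_def B by (simp add: F_inv_def y z_def B_def)
  also have "\<dots> = y"
  proof -
    have "2 * B * (w - z) = a + \<i> * complex_of_real c * w / 2"
      using B_nz by (simp add: wz F_inv_eta_def y)
    moreover have "Im B = c / 4"
      by (simp add: B_def Im_F_inv_B y)
    ultimately show ?thesis
      by (auto simp: y complex_eq_iff)
  qed
  finally show "F_coord (F_inv y) = y" .
qed

lemma snd_F_coord_nonzero:
  assumes "fst x \<noteq> snd x"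
  shows "snd (F_coord x) \<noteq> 0"
proof
  assume "snd (F_coord x) = 0"
  then have "rho_inv x = 0"
    by (metis F_inv_F_coord(1)[OF assms] F_inv_B_eq_0_iff)
  with assms show False
    by (simp add: rho_inv_def heis_rho_eq_0_iff)
qed

lemma F_inv_off_diagonal:
  assumes "snd y \<noteq> 0"
  shows "fst (F_inv y) \<noteq> snd (F_inv y)"
proof
  assume "fst (F_inv y) = snd (F_inv y)"
  then have "rho_inv (F_inv y) = 0"
    by (simp add: rho_inv_def heis_rho_eq_0_iff)
  with assms show False
    using F_coord_F_inv(1)[OF assms] F_inv_B_eq_0_iff by simp
qed

lemma higher_differentiable_on_F_inv_B [higher_differentiable_intros]:
  "open S \<Longrightarrow> higher_differentiable_on S F_inv_B n"
  unfolding F_inv_B_def[abs_def] F_inv_eta_def by (intro higher_differentiable_intros)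

lemma higher_differentiable_on_F_inv:
  "higher_differentiable_on {(q, \<xi>). \<xi> \<noteq> 0} F_inv n"
  unfolding F_inv_def[abs_def] F_inv_z_def F_inv_eta_def
  by (intro higher_differentiable_intros open_nonzero_fibres)
    (auto simp: F_inv_B_eq_0_iff case_prod_beta)

section \<open>The pullback of the canonical symplectic form\<close>

definition dq_logrho_deriv :: "heis \<times> heis \<Rightarrow> heis \<times> heis \<Rightarrow> heis \<Rightarrow> complex" where
  "dq_logrho_deriv x h c =
     rho_inv x * (rho_dpdq (fst h) c + rho_dqdq (snd h) c)
     - rho_inv x * (rho_dp (fst x) (snd x) (fst h) + rho_dq (fst x) (snd x) (snd h)) * rho_inv x
       * rho_dq (fst x) (snd x) c"

lemma has_derivative_d_q_logrho:
  assumes "fst x \<noteq> snd x"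
  shows "((\<lambda>y. d_q logrho y c) has_derivative (\<lambda>h. dq_logrho_deriv x h c)) (at x)"
proof (rule has_derivative_transform_within_open[OF _ open_off_diagonal])
  have "heis_rho (fst x) (snd x) \<noteq> 0"
    using assms by (simp add: heis_rho_eq_0_iff)
  then show "((\<lambda>y. rho_inv y * rho_dq (fst y) (snd y) c) has_derivative
      (\<lambda>h. dq_logrho_deriv x h c)) (at x)"
    unfolding rho_inv_def dq_logrho_deriv_def
    by (auto intro!: derivative_eq_intros has_derivative_heis_rho has_derivative_rho_dq)
  show "x \<in> {(p, q). p \<noteq> q}" using assms by auto
  show "rho_inv y * rho_dq (fst y) (snd y) c = d_q logrho y c" if "y \<in> {(p, q). p \<noteq> q}" for y
    using that by (cases y) (simp add: d_q_logrho)
qed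

lemma d_p_d_q_logrho:
  assumes "p \<noteq> q"
  shows "d_p (\<lambda>x. d_q logrho x c) (p, q) a = dq_logrho_deriv (p, q) (a, 0) c"
proof -
  have "((\<lambda>p'. (p', q)) has_derivative (\<lambda>a. (a, 0))) (at p)"
    by (auto intro!: derivative_eq_intros)
  from has_derivative_compose[OF this has_derivative_d_q_logrho] assms
  have "((\<lambda>p'. d_q logrho (p', q) c) has_derivative (\<lambda>a. dq_logrho_deriv (p, q) (a, 0) c)) (at p)"
    by simp
  then show ?thesis
    unfolding d_p_def by (simp add: frechet_derivative_at[symmetric])
qed

lemma Omega_H_eq:
  "p \<noteq> q \<Longrightarrow> Omega_H (p, q) (a, b) (a', b') =
     dq_logrho_deriv (p, q) (a, 0) b' - dq_logrho_deriv (p, q) (a', 0) b"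
  by (simp add: Omega_H_def d_p_d_q_logrho)

lemma dq_logrho_deriv_Pair:
  "dq_logrho_deriv x (a, b) c = dq_logrho_deriv x (a, 0) c + dq_logrho_deriv x (0, b) c"
  by (simp add: dq_logrho_deriv_def ring_distribs)

lemma dq_logrho_deriv_right_commute:
  "dq_logrho_deriv x (0, b) c = dq_logrho_deriv x (0, c) b"
  by (simp add: dq_logrho_deriv_def rho_dqdq_commute[of b])

lemma covec_inner: "linear l \<Longrightarrow> covec l \<bullet> c = l c"
  using Linear_Algebra.linear_componentwise[of l c 1]
  by (simp add: covec_def inner_sum_left inner_commute[of c] mult.commute[of "l _"])

lemma inner_snd_F_H:
  assumes "fst x \<noteq> snd x"
  shows "snd (F_H x) \<bullet> c = Re (d_q logrho x c)"
proof -
  obtain p q where x: "x = (p, q)" by (cases x)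
  have "linear (d_q logrho (p, q))"
    using has_derivative_linear[OF has_derivative_logrho_right] assms d_q_logrho x by auto
  then have "linear (alpha_H (p, q))"
    unfolding alpha_H_def[abs_def] using linear_compose[OF _ bounded_linear.linear[OF bounded_linear_Re]]
    by (auto simp: o_def)
  then show ?thesis
    by (simp add: x F_H_def covec_inner alpha_H_def)
qed

lemma frechet_derivative_F_H:
  assumes "fst x \<noteq> snd x"
  shows "fst (frechet_derivative F_H (at x) h) = snd h"
    and "snd (frechet_derivative F_H (at x) h) \<bullet> c = Re (dq_logrho_deriv x h c)"
proof -
  let ?DF = "frechet_derivative F_H (at x)"
  have x: "x \<in> {(p, q). p \<noteq> q}" using assms by auto
  have DF: "(F_H has_derivative ?DF) (at x)"
    by (rule higher_differentiable_on_Suc_has_derivative[OF open_off_diagonal higher_differentiable_on_F_H x])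
  have "((\<lambda>y. fst (F_H y)) has_derivative (\<lambda>h. fst (?DF h))) (at x)"
    using has_derivative_fst[OF DF] .
  moreover have "((\<lambda>y. fst (F_H y)) has_derivative snd) (at x)"
    by (simp add: F_H_def case_prod_beta' has_derivative_snd[OF has_derivative_ident])
  ultimately show "fst (?DF h) = snd h"
    by (metis has_derivative_unique)
  have "((\<lambda>y. snd (F_H y) \<bullet> c) has_derivative (\<lambda>h. snd (?DF h) \<bullet> c)) (at x)"
    using has_derivative_inner_left[OF has_derivative_snd[OF DF]] .
  moreover have "((\<lambda>y. snd (F_H y) \<bullet> c) has_derivative (\<lambda>h. Re (dq_logrho_deriv x h c))) (at x)"
  proof (rule has_derivative_transform_within_open[OF _ open_off_diagonal x])
    show "((\<lambda>y. Re (d_q logrho y c)) has_derivative (\<lambda>h. Re (dq_logrho_deriv x h c))) (at x)"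
      using has_derivative_Re[OF has_derivative_d_q_logrho[OF assms]] .
    show "Re (d_q logrho y c) = snd (F_H y) \<bullet> c" if "y \<in> {(p, q). p \<noteq> q}" for y
      using that by (cases y) (simp add: inner_snd_F_H)
  qed
  ultimately show "snd (?DF h) \<bullet> c = Re (dq_logrho_deriv x h c)"
    by (metis has_derivative_unique)
qed

lemma pullback_canonical_symplectic_F_H:
  "p \<noteq> q \<Longrightarrow> pullback2 F_H canonical_symplectic (p, q) (a, b) (a', b') =
     Re (dq_logrho_deriv (p, q) (a, b) b') - Re (dq_logrho_deriv (p, q) (a', b') b)"
  by (simp add: pullback2_def canonical_symplectic_def case_prod_beta frechet_derivative_F_H)

lemma Re_Omega_H_eq_pullback:
  assumes "p \<noteq> q"
  shows "Re (Omega_H (p, q) v w) = pullback2 F_H canonical_symplectic (p, q) v w"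
proof -
  obtain a b a' b' where v: "v = (a, b)" and w: "w = (a', b')" by (cases v, cases w)
  show ?thesis
    unfolding v w Omega_H_eq[OF assms] pullback_canonical_symplectic_F_H[OF assms]
      dq_logrho_deriv_Pair[of _ a b] dq_logrho_deriv_Pair[of _ a' b']
      dq_logrho_deriv_right_commute[of _ b]
    by simp
qed

theorem proposition6p4:
  shows "diffeomorphism_betw {(p, q). p \<noteq> q} {(q, \<xi>). \<xi> \<noteq> 0} F_H
     \<and> (\<forall>p q v w. p \<noteq> q \<longrightarrow>
          Re (Omega_H (p, q) v w) = pullback2 F_H canonical_symplectic (p, q) v w)"
proof (intro conjI allI impI)
  show "diffeomorphism_betw {(p, q). p \<noteq> q} {(q, \<xi>). \<xi> \<noteq> 0} F_H"
  proof (rule diffeomorphism_betwI)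
    show "smooth_on {(p, q). p \<noteq> q} F_H"
      using higher_differentiable_on_F_H by (simp add: smooth_on_def)
    show "smooth_on {(q, \<xi>). \<xi> \<noteq> 0} F_inv"
      using higher_differentiable_on_F_inv by (simp add: smooth_on_def)
    show "F_H ` {(p, q). p \<noteq> q} \<subseteq> {(q, \<xi>). \<xi> \<noteq> 0}"
      by (rule image_subsetI) (simp add: case_prod_beta F_H_eq_F_coord snd_F_coord_nonzero)
    show "F_inv ` {(q, \<xi>). \<xi> \<noteq> 0} \<subseteq> {(p, q). p \<noteq> q}"
      by (rule image_subsetI) (simp add: case_prod_beta F_inv_off_diagonal)
    show "F_inv (F_H x) = x" if "x \<in> {(p, q). p \<noteq> q}" for x
      using that F_inv_F_coord(2) F_H_eq_F_coord by (simp add: case_prod_beta)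
    show "F_H (F_inv y) = y" if "y \<in> {(q, \<xi>). \<xi> \<noteq> 0}" for y
      using that F_coord_F_inv(2) F_H_eq_F_coord F_inv_off_diagonal by (simp add: case_prod_beta)
  qed
qed (rule Re_Omega_H_eq_pullback)

end
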